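(* In the continuous Donation Game, assume additionally that $b$ and $c$ are continuous and that $s\mapsto\chi b(s)+c(s)$ is strictly increasing on $[0,K]$. Let $\chi\ge1$, $0\le\kappa\le b(K)-c(K)$, $\psi(s):=-\chi b(s)-c(s)$ (a continuous strictly decreasing bijection $[0,K]\to[\psi(K),0]$ with inverse $\psi^{-1}$), and suppose $\lambda\ge\frac{b(K)+\chi c(K)}{\chi b(K)+c(K)}$. Let $x_0\in[0,K]$ satisfy $$\frac{(\chi-1)\kappa-\lambda(\chi b(K)+c(K))+b(K)+\chi c(K)}{1-\lambda}\le\chi b(x_0)+c(x_0)\le\frac{(\chi-1)\kappa}{1-\lambda}.$$ Then $r^X(x,y):=\psi^{-1}\!\left(\frac{-b(y)-\chi c(y)-(\chi-1)\kappa-(1-\lambda)\psi(x_0)}{\lambda}\right)$ is well defined for all $x,y\in[0,K]$, and the deterministic memory-one strategy for $X$ with $\sigma_X^0=\delta_{x_0}$ and $\sigma_X[x,y]=\delta_{r^X(x,y)}$ enforces $\pi_X-\kappa=\chi(\pi_Y-\kappa)$ against every behavioral strategy of $Y$.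
   Context: Continuous Donation Game: fix $K>0$ and measurable nondecreasing functions $b,c:[0,K]\to\mathbb{R}$ with $b(0)=c(0)=0$ and $b(s)>c(s)$ for $s>0$. Action spaces $S_X=S_Y=[0,K]$, payoffs $u_X(x,y)=b(y)-c(x)$, $u_Y(x,y)=b(x)-c(y)$, discount factor $\lambda\in(0,1)$. Repeated-game framework: histories $\mathcal{H}=\bigsqcup_T(S_X\times S_Y)^T$; a behavioral strategy is a Markov kernel from histories to the player's action space; a memory-one strategy for $X$ consists of an initial probability measure $\sigma_X^0$ and a Markov kernel $\sigma_X[x,y]$ applied to the previous action pair. The strategies generate, via $\mu_0=\sigma_X[\varnothing]\otimes\sigma_Y[\varnothing]$ and $\mu_t(E'\times E)=\int_{E'}(\sigma_X[h]\otimes\sigma_Y[h])(E)\,d\mu_{t-1}(h)$, the laws $\nu_t(E)=\mu_t(\mathcal{H}^t\times E)$ of the action pair at time $t$, and $\pi_X=(1-\lambda)\sum_t\lambda^t\int u_X\,d\nu_t$, $\pi_Y=(1-\lambda)\sum_t\lambda^t\int u_Y\,d\nu_t$. $\delta_s$ is the Dirac measure at $s$. *)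

theory Defs
  imports "HOL-Probability.Probability"
begin

definition act :: "real \<Rightarrow> real measure" where
  "act K = restrict_space borel {0..K}"

text \<open>Histories of length t: elements of (S_X x S_Y)^t, encoded as extensional
  functions on {..<t}; entry i is the action pair (x_i, y_i) played at time i.\<close>
definition histM :: "real \<Rightarrow> nat \<Rightarrow> (nat \<Rightarrow> real \<times> real) measure" where
  "histM K t = PiM {..<t} (\<lambda>_. act K \<Otimes>\<^sub>M act K)"

definition behavioral_strategy ::
  "real \<Rightarrow> (nat \<Rightarrow> (nat \<Rightarrow> real \<times> real) \<Rightarrow> real measure) \<Rightarrow> bool" where
  "behavioral_strategy K \<sigma> \<longleftrightarrow> (\<forall>t. \<sigma> t \<in> histM K t \<rightarrow>\<^sub>M prob_algebra (act K))"

definition memory_one ::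
  "real measure \<Rightarrow> (real \<times> real \<Rightarrow> real measure) \<Rightarrow> nat \<Rightarrow> (nat \<Rightarrow> real \<times> real) \<Rightarrow> real measure" where
  "memory_one s0 \<sigma> t h = (if t = 0 then s0 else \<sigma> (h (t - 1)))"

text \<open>Law mu of the history: hist_law ... t is the law of the history of length t.
  (The paper's mu_t is hist_law ... (Suc t).)\<close>
fun hist_law ::
  "real \<Rightarrow> (nat \<Rightarrow> (nat \<Rightarrow> real \<times> real) \<Rightarrow> real measure)
   \<Rightarrow> (nat \<Rightarrow> (nat \<Rightarrow> real \<times> real) \<Rightarrow> real measure) \<Rightarrow> nat \<Rightarrow> (nat \<Rightarrow> real \<times> real) measure" where
  "hist_law K sX sY 0 = return (histM K 0) (\<lambda>_. undefined)"
| "hist_law K sX sY (Suc t) =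
     bind (hist_law K sX sY t)
       (\<lambda>h. distr (sX t h \<Otimes>\<^sub>M sY t h) (histM K (Suc t)) (\<lambda>a. h(t := a)))"

definition action_law ::
  "real \<Rightarrow> (nat \<Rightarrow> (nat \<Rightarrow> real \<times> real) \<Rightarrow> real measure)
   \<Rightarrow> (nat \<Rightarrow> (nat \<Rightarrow> real \<times> real) \<Rightarrow> real measure) \<Rightarrow> nat \<Rightarrow> (real \<times> real) measure" where
  "action_law K sX sY t = distr (hist_law K sX sY (Suc t)) (act K \<Otimes>\<^sub>M act K) (\<lambda>h. h t)"

definition payoff ::
  "real \<Rightarrow> real \<Rightarrow> (real \<times> real \<Rightarrow> real) \<Rightarrow> (nat \<Rightarrow> (nat \<Rightarrow> real \<times> real) \<Rightarrow> real measure)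
   \<Rightarrow> (nat \<Rightarrow> (nat \<Rightarrow> real \<times> real) \<Rightarrow> real measure) \<Rightarrow> real" where
  "payoff K lam u sX sY = (1 - lam) * (\<Sum>t. lam ^ t * (\<integral>a. u a \<partial>action_law K sX sY t))"

end

theory Submission
  imports Defs
begin

text \<open>
  Put \<psi>(x) = -\<chi> b(x) - c(x) and \<phi>(y) = b(y) + \<chi> c(y), so that u_X - \<chi> u_Y = \<psi>(x) + \<phi>(y).
  The response of X is chosen so that \<lambda> \<psi>(x(t+1)) = -\<phi>(y(t)) - C with
  C = (\<chi> - 1) \<kappa> + (1 - \<lambda>) \<psi>(x0), whatever Y plays; the bounds on x0 put the right-hand
  side into [\<psi>(K), 0], the range of \<psi>. Taking expectations, E \<phi>(y(t)) = -\<lambda> E \<psi>(x(t+1)) - C,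
  so the discounted sum of E (\<psi>(x(t)) + \<phi>(y(t))) telescopes and
  \<pi>_X - \<chi> \<pi>_Y = (1 - \<lambda>) \<psi>(x0) - C = (1 - \<chi>) \<kappa>.
\<close>

lemma (in prob_space) integrable_bounded:
  fixes f :: "'a \<Rightarrow> real"
  assumes "f \<in> borel_measurable M" and "\<And>x. x \<in> space M \<Longrightarrow> \<bar>f x\<bar> \<le> B"
  shows "integrable M f"
  using assms by (intro integrable_const_bound[where B = B]) (auto intro: AE_I2)

lemma (in prob_space) abs_integral_le_bound:
  fixes f :: "'a \<Rightarrow> real"
  assumes f: "f \<in> borel_measurable M" and B: "\<And>x. x \<in> space M \<Longrightarrow> \<bar>f x\<bar> \<le> B"
  shows "\<bar>\<integral>x. f x \<partial>M\<bar> \<le> B"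
proof -
  have "\<bar>\<integral>x. f x \<partial>M\<bar> \<le> (\<integral>x. \<bar>f x\<bar> \<partial>M)"
    by (rule integral_abs_bound)
  also have "\<dots> \<le> B"
    using integrable_bounded[OF f B] B by (intro integral_le_const) (auto intro: AE_I2)
  finally show ?thesis .
qed

lemma integral_fst_return_pair:
  fixes f :: "'a \<Rightarrow> real"
  assumes N: "prob_space N" and z: "z \<in> space M" and f: "f \<in> borel_measurable M"
  shows "(\<integral>a. f (fst a) \<partial>(return M z \<Otimes>\<^sub>M N)) = f z"
proof -
  have "(\<integral>a. f (fst a) \<partial>(return M z \<Otimes>\<^sub>M N)) = (\<integral>a. f a \<partial>distr (return M z \<Otimes>\<^sub>M N) (return M z) fst)"
    using f by (intro integral_distr[symmetric] measurable_fst) simp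
  also have "distr (return M z \<Otimes>\<^sub>M N) (return M z) fst = return M z"
    by (rule prob_space.distr_pair_fst[OF N])
  finally show ?thesis
    using z f by (simp add: integral_return)
qed

lemma summable_discounted:
  fixes f :: "nat \<Rightarrow> real"
  assumes lam: "\<bar>lam\<bar> < 1" and B: "\<And>t. \<bar>f t\<bar> \<le> B"
  shows "summable (\<lambda>t. lam ^ t * f t)"
proof (rule summable_comparison_test')
  show "summable (\<lambda>t. B * \<bar>lam\<bar> ^ t)"
    using lam by (intro summable_mult summable_geometric) simp
  show "norm (lam ^ t * f t) \<le> B * \<bar>lam\<bar> ^ t" for t
    using B[of t] by (simp add: abs_mult power_abs mult.commute mult_right_mono)
qed

lemma discounted_sum_of_recursion:
  fixes P F :: "nat \<Rightarrow> real"
  assumes lam: "\<bar>lam\<bar> < 1" and P: "\<And>t. \<bar>P t\<bar> \<le> B"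
    and F: "\<And>t. F t = - lam * P (Suc t) - C"
  shows "(1 - lam) * (\<Sum>t. lam ^ t * P t) + (1 - lam) * (\<Sum>t. lam ^ t * F t) = (1 - lam) * P 0 - C"
proof -
  have sP: "summable (\<lambda>t. lam ^ t * P t)"
    using summable_discounted[OF lam P] .
  then have sP': "summable (\<lambda>t. lam ^ Suc t * P (Suc t))"
    by (rule summable_Suc_iff[THEN iffD2])
  have sG: "summable (\<lambda>t. lam ^ t)"
    using lam by (intro summable_geometric) simp
  have "(\<Sum>t. lam ^ t * F t) = (\<Sum>t. - (lam ^ Suc t * P (Suc t)) - C * lam ^ t)"
    by (simp add: F algebra_simps)
  also have "\<dots> = - (\<Sum>t. lam ^ Suc t * P (Suc t)) - C * (\<Sum>t. lam ^ t)"
    using suminf_diff[OF summable_minus[OF sP'] summable_mult[OF sG]] suminf_minus[OF sP']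
      suminf_mult[OF sG] by simp
  also have "(\<Sum>t. lam ^ Suc t * P (Suc t)) = (\<Sum>t. lam ^ t * P t) - P 0"
    using suminf_split_head[OF sP] by simp
  also have "(\<Sum>t. lam ^ t) = 1 / (1 - lam)"
    using lam by (intro suminf_geometric) simp
  finally show ?thesis
    using lam by (simp add: field_simps)
qed

lemma space_act: "space (act K) = {0..K}"
  by (simp add: act_def space_restrict_space)

lemma borel_measurable_act: "continuous_on {0..K} f \<Longrightarrow> f \<in> borel_measurable (act K)"
  unfolding act_def by (rule borel_measurable_continuous_on_restrict)

lemma measurable_act_act:
  assumes "continuous_on {0..K} f" and "f ` {0..K} \<subseteq> {0..K}"
  shows "f \<in> act K \<rightarrow>\<^sub>M act K"
  unfolding act_def
  using assms by (intro measurable_restrict_space2 borel_measurable_continuous_on_restrict)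
    (auto simp: space_restrict_space)

lemma measurable_history_entry:
  "i < t \<Longrightarrow> (\<lambda>h. h i) \<in> histM K t \<rightarrow>\<^sub>M act K \<Otimes>\<^sub>M act K"
  unfolding histM_def by (intro measurable_component_singleton) simp

lemma measurable_history_update:
  "(\<lambda>(h, a). h(t := a)) \<in> histM K t \<Otimes>\<^sub>M (act K \<Otimes>\<^sub>M act K) \<rightarrow>\<^sub>M histM K (Suc t)"
proof -
  have "insert t {..<t} = {..<Suc t}" by auto
  then show ?thesis
    unfolding histM_def using measurable_add_dim[of t "{..<t}" "\<lambda>_. act K \<Otimes>\<^sub>M act K"] by simp
qed

lemma behavioral_strategy_memory_one:
  assumes s0: "s0 \<in> space (prob_algebra (act K))"
    and \<sigma>: "\<sigma> \<in> act K \<Otimes>\<^sub>M act K \<rightarrow>\<^sub>M prob_algebra (act K)"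
  shows "behavioral_strategy K (memory_one s0 \<sigma>)"
  unfolding behavioral_strategy_def
proof
  fix t
  show "memory_one s0 \<sigma> t \<in> histM K t \<rightarrow>\<^sub>M prob_algebra (act K)"
  proof (cases t)
    case 0
    then have "memory_one s0 \<sigma> t = (\<lambda>h. s0)"
      by (simp add: fun_eq_iff memory_one_def)
    then show ?thesis
      using measurable_const[OF s0] by simp
  next
    case (Suc n)
    have "(\<lambda>h. \<sigma> (h n)) \<in> histM K t \<rightarrow>\<^sub>M prob_algebra (act K)"
      using Suc by (intro measurable_compose[OF measurable_history_entry \<sigma>]) simp
    moreover have "memory_one s0 \<sigma> t = (\<lambda>h. \<sigma> (h n))"
      using Suc by (simp add: fun_eq_iff memory_one_def)
    ultimately show ?thesis
      by simp
  qed
qed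

(* Unfolding hist_law (Suc t) into a bind would hide it from space_hist_law and sets_hist_law. *)
declare hist_law.simps [simp del]

locale strategy_profile =
  fixes K :: real and sX sY :: "nat \<Rightarrow> (nat \<Rightarrow> real \<times> real) \<Rightarrow> real measure"
  assumes behavioral_X: "behavioral_strategy K sX"
    and behavioral_Y: "behavioral_strategy K sY"
begin

abbreviation action_kernel :: "nat \<Rightarrow> (nat \<Rightarrow> real \<times> real) \<Rightarrow> (real \<times> real) measure" where
  "action_kernel t h \<equiv> sX t h \<Otimes>\<^sub>M sY t h"

abbreviation history_kernel :: "nat \<Rightarrow> (nat \<Rightarrow> real \<times> real) \<Rightarrow> (nat \<Rightarrow> real \<times> real) measure" where
  "history_kernel t h \<equiv> distr (action_kernel t h) (histM K (Suc t)) (\<lambda>a. h(t := a))"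

lemma measurable_action_kernel:
  "action_kernel t \<in> histM K t \<rightarrow>\<^sub>M prob_algebra (act K \<Otimes>\<^sub>M act K)"
  using behavioral_X behavioral_Y unfolding behavioral_strategy_def
  by (intro measurable_pair_prob) auto

lemma measurable_history_kernel:
  "history_kernel t \<in> histM K t \<rightarrow>\<^sub>M prob_algebra (histM K (Suc t))"
  using measurable_distr_prob_space2[OF measurable_action_kernel, of "\<lambda>h a. h(t := a)"]
    measurable_history_update by simp

lemma hist_law_in_prob_algebra: "hist_law K sX sY t \<in> space (prob_algebra (histM K t))"
proof (induction t)
  case 0
  have "(\<lambda>_. undefined) \<in> space (histM K 0)"
    by (simp add: histM_def space_PiM)
  then show ?case
    by (simp add: hist_law.simps measurable_space[OF measurable_return_prob_space])
next
  case (Suc t)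
  then show ?case
    using prob_space_bind'[OF Suc measurable_history_kernel]
      sets_bind'[OF Suc measurable_history_kernel] by (simp add: hist_law.simps space_prob_algebra)
qed

lemma prob_space_hist_law: "prob_space (hist_law K sX sY t)"
  and sets_hist_law: "sets (hist_law K sX sY t) = sets (histM K t)"
  using hist_law_in_prob_algebra[of t] by (simp_all add: space_prob_algebra)

lemma space_hist_law: "space (hist_law K sX sY t) = space (histM K t)"
  using sets_eq_imp_space_eq[OF sets_hist_law] .

lemma measurable_last_action:
  "(\<lambda>h. h t) \<in> hist_law K sX sY (Suc t) \<rightarrow>\<^sub>M act K \<Otimes>\<^sub>M act K"
  by (simp only: measurable_cong_sets[OF sets_hist_law refl]) (simp add: measurable_history_entry)

lemma prob_space_action_law: "prob_space (action_law K sX sY t)"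
  unfolding action_law_def
  by (rule prob_space.prob_space_distr[OF prob_space_hist_law measurable_last_action])

lemma sets_action_law: "sets (action_law K sX sY t) = sets (act K \<Otimes>\<^sub>M act K)"
  by (simp add: action_law_def)

lemma space_action_law: "space (action_law K sX sY t) = space (act K \<Otimes>\<^sub>M act K)"
  using sets_eq_imp_space_eq[OF sets_action_law] .

lemma borel_measurable_action_law:
  "f \<in> borel_measurable (act K \<Otimes>\<^sub>M act K) \<Longrightarrow> f \<in> borel_measurable (action_law K sX sY t)"
  by (simp add: measurable_cong_sets[OF sets_action_law])

lemma integral_action_law:
  fixes f :: "real \<times> real \<Rightarrow> real"
  assumes f: "f \<in> borel_measurable (act K \<Otimes>\<^sub>M act K)"
    and B: "\<And>a. a \<in> space (act K \<Otimes>\<^sub>M act K) \<Longrightarrow> \<bar>f a\<bar> \<le> B"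
  shows "(\<integral>a. f a \<partial>action_law K sX sY t) = (\<integral>h. (\<integral>a. f a \<partial>action_kernel t h) \<partial>hist_law K sX sY t)"
proof -
  have f_last: "(\<lambda>h. f (h t)) \<in> borel_measurable (histM K (Suc t))"
    by (rule measurable_compose[OF measurable_history_entry f]) simp
  have kernel: "history_kernel t \<in> hist_law K sX sY t \<rightarrow>\<^sub>M subprob_algebra (histM K (Suc t))"
    unfolding measurable_cong_sets[OF sets_hist_law refl]
    by (rule measurable_prob_algebraD[OF measurable_history_kernel])
  have kernel_mass: "emeasure (history_kernel t h) (space (histM K (Suc t))) = 1"
    if "h \<in> space (histM K t)" for h
  proof -
    have "prob_space (history_kernel t h)"
      using measurable_space[OF measurable_history_kernel that] by (simp add: space_prob_algebra)
    from prob_space.emeasure_space_1[OF this] show ?thesis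
      by simp
  qed
  have "(\<integral>a. f a \<partial>action_law K sX sY t) = (\<integral>h. f (h t) \<partial>hist_law K sX sY (Suc t))"
    unfolding action_law_def by (rule integral_distr[OF measurable_last_action f])
  also have "\<dots> = (\<integral>h. (\<integral>h'. f (h' t) \<partial>history_kernel t h) \<partial>hist_law K sX sY t)"
    unfolding hist_law.simps
  proof (rule integral_bind[OF f_last _ kernel, where B = B and B' = 1])
    show "\<bar>f (h t)\<bar> \<le> B" if "h \<in> space (histM K (Suc t))" for h
      using B measurable_space[OF measurable_history_entry that] by simp
    show "finite_measure (hist_law K sX sY t)"
      using prob_space_hist_law by (simp add: prob_space_def)
    show "AE h in hist_law K sX sY t. emeasure (history_kernel t h) (space (history_kernel t h)) \<le> ennreal 1"
      using kernel_mass by (intro AE_I2) (simp add: space_hist_law)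
  qed
  also have "\<dots> = (\<integral>h. (\<integral>a. f a \<partial>action_kernel t h) \<partial>hist_law K sX sY t)"
  proof (rule Bochner_Integration.integral_cong[OF refl])
    fix h assume "h \<in> space (hist_law K sX sY t)"
    then have h: "h \<in> space (histM K t)"
      by (simp add: space_hist_law)
    have kernel_sets: "sets (action_kernel t h) = sets (act K \<Otimes>\<^sub>M act K)"
      using measurable_space[OF measurable_action_kernel h] by (simp add: space_prob_algebra)
    have "(\<lambda>a. h(t := a)) \<in> action_kernel t h \<rightarrow>\<^sub>M histM K (Suc t)"
      unfolding measurable_cong_sets[OF kernel_sets refl]
      using measurable_Pair2[OF measurable_history_update h] by simp
    from integral_distr[OF this f_last]
    show "(\<integral>h'. f (h' t) \<partial>history_kernel t h) = (\<integral>a. f a \<partial>action_kernel t h)"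
      by simp
  qed
  finally show ?thesis .
qed

lemma integral_fst_action_law_deterministic:
  fixes f :: "real \<Rightarrow> real"
  assumes det: "\<And>h. h \<in> space (histM K t) \<Longrightarrow> sX t h = return (act K) (r h)"
    and r: "\<And>h. h \<in> space (histM K t) \<Longrightarrow> r h \<in> {0..K}"
    and f: "f \<in> borel_measurable (act K)" and B: "\<And>x. x \<in> {0..K} \<Longrightarrow> \<bar>f x\<bar> \<le> B"
  shows "(\<integral>a. f (fst a) \<partial>action_law K sX sY t) = (\<integral>h. f (r h) \<partial>hist_law K sX sY t)"
proof -
  have "(\<integral>a. f (fst a) \<partial>action_law K sX sY t) = (\<integral>h. (\<integral>a. f (fst a) \<partial>action_kernel t h) \<partial>hist_law K sX sY t)"
  proof (rule integral_action_law)
    show "(\<lambda>a. f (fst a)) \<in> borel_measurable (act K \<Otimes>\<^sub>M act K)"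
      by (rule measurable_compose[OF measurable_fst f])
    show "\<bar>f (fst a)\<bar> \<le> B" if "a \<in> space (act K \<Otimes>\<^sub>M act K)" for a
      using that B by (auto simp: space_pair_measure space_act)
  qed
  also have "\<dots> = (\<integral>h. f (r h) \<partial>hist_law K sX sY t)"
  proof (rule Bochner_Integration.integral_cong[OF refl])
    fix h assume "h \<in> space (hist_law K sX sY t)"
    then have h: "h \<in> space (histM K t)"
      by (simp add: space_hist_law)
    have "sY t \<in> histM K t \<rightarrow>\<^sub>M prob_algebra (act K)"
      using behavioral_Y by (simp add: behavioral_strategy_def)
    from measurable_space[OF this h] have "prob_space (sY t h)"
      by (simp add: space_prob_algebra)
    moreover have "r h \<in> space (act K)"
      using r[OF h] by (simp add: space_act)
    ultimately have "(\<integral>a. f (fst a) \<partial>(return (act K) (r h) \<Otimes>\<^sub>M sY t h)) = f (r h)"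
      using f by (rule integral_fst_return_pair)
    then show "(\<integral>a. f (fst a) \<partial>action_kernel t h) = f (r h)"
      unfolding det[OF h] .
  qed
  finally show ?thesis .
qed

lemma payoff_add_mult:
  assumes lam: "\<bar>lam\<bar> < 1"
    and u: "u \<in> borel_measurable (act K \<Otimes>\<^sub>M act K)"
      "\<And>a. a \<in> space (act K \<Otimes>\<^sub>M act K) \<Longrightarrow> \<bar>u a\<bar> \<le> Bu"
    and v: "v \<in> borel_measurable (act K \<Otimes>\<^sub>M act K)"
      "\<And>a. a \<in> space (act K \<Otimes>\<^sub>M act K) \<Longrightarrow> \<bar>v a\<bar> \<le> Bv"
  shows "payoff K lam (\<lambda>a. u a + r * v a) sX sY = payoff K lam u sX sY + r * payoff K lam v sX sY"
proof -
  define U where "U t = (\<integral>a. u a \<partial>action_law K sX sY t)" for t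
  define V where "V t = (\<integral>a. v a \<partial>action_law K sX sY t)" for t
  have int_u: "integrable (action_law K sX sY t) u" and int_v: "integrable (action_law K sX sY t) v"
    and U: "\<bar>U t\<bar> \<le> Bu" and V: "\<bar>V t\<bar> \<le> Bv" for t
    using prob_space.integrable_bounded[OF prob_space_action_law] u v
      prob_space.abs_integral_le_bound[OF prob_space_action_law]
    unfolding U_def V_def space_action_law by (metis borel_measurable_action_law)+
  have "(\<Sum>t. lam ^ t * (\<integral>a. u a + r * v a \<partial>action_law K sX sY t)) = (\<Sum>t. lam ^ t * U t + r * (lam ^ t * V t))"
    using int_u int_v by (simp add: U_def V_def algebra_simps)
  also have "\<dots> = (\<Sum>t. lam ^ t * U t) + r * (\<Sum>t. lam ^ t * V t)"
    using summable_discounted[OF lam U] summable_discounted[OF lam V]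
    by (simp add: suminf_add[symmetric] suminf_mult summable_mult)
  finally show ?thesis
    unfolding payoff_def U_def V_def by (simp add: algebra_simps)
qed

end

locale donation_game =
  fixes K chi :: real and b c :: "real \<Rightarrow> real"
  assumes b0: "b 0 = 0" and c0: "c 0 = 0"
    and b_mono: "mono_on {0..K} b" and c_mono: "mono_on {0..K} c"
    and b_cont: "continuous_on {0..K} b" and c_cont: "continuous_on {0..K} c"
    and chi: "chi \<ge> 1"
    and strict_mono_chi_b_c: "strict_mono_on {0..K} (\<lambda>s. chi * b s + c s)"
begin

definition psi :: "real \<Rightarrow> real" where "psi s = - chi * b s - c s"

definition phi :: "real \<Rightarrow> real" where "phi s = b s + chi * c s"

lemma b_bounds: "s \<in> {0..K} \<Longrightarrow> 0 \<le> b s \<and> b s \<le> b K"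
  using mono_onD[OF b_mono, of 0 s] mono_onD[OF b_mono, of s K] b0 by auto

lemma c_bounds: "s \<in> {0..K} \<Longrightarrow> 0 \<le> c s \<and> c s \<le> c K"
  using mono_onD[OF c_mono, of 0 s] mono_onD[OF c_mono, of s K] c0 by auto

lemma phi_bounds:
  assumes "s \<in> {0..K}" shows "0 \<le> phi s \<and> phi s \<le> phi K"
proof -
  have "0 \<le> chi * c s" "chi * c s \<le> chi * c K"
    using c_bounds[OF assms] chi by (auto intro: mult_left_mono)
  then show ?thesis
    using b_bounds[OF assms] by (simp add: phi_def)
qed

lemma abs_psi_le:
  assumes "s \<in> {0..K}" shows "\<bar>psi s\<bar> \<le> chi * b K + c K"
proof -
  have "0 \<le> chi * b s" "chi * b s \<le> chi * b K"
    using b_bounds[OF assms] chi by (auto intro: mult_left_mono)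
  then show ?thesis
    using c_bounds[OF assms] by (simp add: psi_def)
qed

lemma psi_0: "psi 0 = 0"
  by (simp add: psi_def b0 c0)

lemma continuous_on_psi: "continuous_on {0..K} psi"
  unfolding psi_def by (intro continuous_intros b_cont c_cont)

lemma continuous_on_phi: "continuous_on {0..K} phi"
  unfolding phi_def by (intro continuous_intros b_cont c_cont)

lemma inj_on_psi: "inj_on psi {0..K}"
proof (rule inj_onI)
  fix x y assume x: "x \<in> {0..K}" and y: "y \<in> {0..K}" and "psi x = psi y"
  then have "chi * b x + c x = chi * b y + c y"
    unfolding psi_def by linarith
  with x y show "x = y"
    by (rule inj_onD[OF strict_mono_on_imp_inj_on[OF strict_mono_chi_b_c], rotated])
qed

lemma abs_payoff_le: "x \<in> {0..K} \<Longrightarrow> y \<in> {0..K} \<Longrightarrow> \<bar>b x - c y\<bar> \<le> b K + c K"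
  using b_bounds[of x] c_bounds[of y] by (simp add: abs_le_iff)

lemma borel_measurable_b [measurable]: "b \<in> borel_measurable (act K)"
  and borel_measurable_c [measurable]: "c \<in> borel_measurable (act K)"
  and borel_measurable_psi [measurable]: "psi \<in> borel_measurable (act K)"
  and borel_measurable_phi [measurable]: "phi \<in> borel_measurable (act K)"
  using b_cont c_cont continuous_on_psi continuous_on_phi by (simp_all add: borel_measurable_act)

lemma borel_measurable_psi_fst: "(\<lambda>a. psi (fst a)) \<in> borel_measurable (act K \<Otimes>\<^sub>M act K)"
  and borel_measurable_phi_snd: "(\<lambda>a. phi (snd a)) \<in> borel_measurable (act K \<Otimes>\<^sub>M act K)"
  and borel_measurable_payoff_Y: "(\<lambda>(x, y). b x - c y) \<in> borel_measurable (act K \<Otimes>\<^sub>M act K)"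
  by measurable

lemma payoff_X_decomposition:
  "(\<lambda>(x, y). b y - c x) = (\<lambda>a. (psi (fst a) + phi (snd a)) + chi * (\<lambda>(x, y). b x - c y) a)"
  by (simp add: fun_eq_iff psi_def phi_def algebra_simps)

end

locale linear_enforcement = donation_game +
  fixes lam kappa x0 :: real
  assumes lam: "0 < lam" "lam < 1"
    and x0: "x0 \<in> {0..K}"
    and x0_lower: "((chi - 1) * kappa - lam * (chi * b K + c K) + b K + chi * c K) / (1 - lam)
                     \<le> chi * b x0 + c x0"
    and x0_upper: "chi * b x0 + c x0 \<le> (chi - 1) * kappa / (1 - lam)"
begin

lemma abs_lam_less_1: "\<bar>lam\<bar> < 1"
  using lam by simp

definition offset :: real where "offset = (chi - 1) * kappa + (1 - lam) * psi x0"

definition target :: "real \<Rightarrow> real" where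
  "target y = (- b y - chi * c y - (chi - 1) * kappa - (1 - lam) * psi x0) / lam"

definition response :: "real \<Rightarrow> real" where
  "response y = the_inv_into {0..K} psi (target y)"

definition enforcing_strategy :: "nat \<Rightarrow> (nat \<Rightarrow> real \<times> real) \<Rightarrow> real measure" where
  "enforcing_strategy = memory_one (return (act K) x0) (\<lambda>p. return (act K) (response (snd p)))"

lemma target_eq: "target y = (- phi y - offset) / lam"
  by (simp add: target_def phi_def offset_def algebra_simps)

lemma offset_bounds: "0 \<le> offset" "offset + phi K \<le> - lam * psi K"
proof -
  have "0 < 1 - lam"
    using lam by simp
  then have "(1 - lam) * (chi * b x0 + c x0) \<le> (chi - 1) * kappa"
    and "(chi - 1) * kappa - lam * (chi * b K + c K) + b K + chi * c K \<le> (1 - lam) * (chi * b x0 + c x0)"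
    using x0_upper x0_lower by (simp_all add: field_simps)
  then show "0 \<le> offset" "offset + phi K \<le> - lam * psi K"
    by (simp_all add: offset_def psi_def phi_def algebra_simps)
qed

lemma target_in_image:
  assumes y: "y \<in> {0..K}" shows "target y \<in> psi ` {0..K}"
proof -
  have upper: "target y \<le> psi 0"
    using phi_bounds[OF y] offset_bounds lam by (simp add: target_eq psi_0 divide_nonpos_pos)
  have lower: "psi K \<le> target y"
    using phi_bounds[OF y] offset_bounds lam by (simp add: target_eq le_divide_eq algebra_simps)
  have "0 \<le> K"
    using x0 by simp
  from IVT2'[OF lower upper this continuous_on_psi] obtain x where "x \<in> {0..K}" "target y = psi x"
    by auto
  then show ?thesis
    by (rule rev_image_eqI)
qed

lemma response_in: "y \<in> {0..K} \<Longrightarrow> response y \<in> {0..K}"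
  unfolding response_def using target_in_image the_inv_into_into[OF inj_on_psi] by blast

lemma psi_response: "y \<in> {0..K} \<Longrightarrow> psi (response y) = target y"
  unfolding response_def using target_in_image f_the_inv_into_f[OF inj_on_psi] by blast

lemma continuous_on_target: "continuous_on {0..K} target"
  unfolding target_def using lam by (intro continuous_intros b_cont c_cont) auto

lemma continuous_on_response: "continuous_on {0..K} response"
proof -
  have "continuous_on (psi ` {0..K}) (the_inv_into {0..K} psi)"
    by (rule continuous_on_inv_into[OF continuous_on_psi compact_Icc inj_on_psi])
  from continuous_on_compose2[OF this continuous_on_target] show ?thesis
    unfolding response_def using target_in_image by blast
qed

lemma behavioral_enforcing_strategy: "behavioral_strategy K enforcing_strategy"
  unfolding enforcing_strategy_def
proof (rule behavioral_strategy_memory_one)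
  show "return (act K) x0 \<in> space (prob_algebra (act K))"
    using x0 by (intro measurable_space[OF measurable_return_prob_space]) (simp add: space_act)
  have "response \<in> act K \<rightarrow>\<^sub>M act K"
    using continuous_on_response response_in by (intro measurable_act_act) auto
  from measurable_compose[OF measurable_compose[OF measurable_snd this] measurable_return_prob_space]
  show "(\<lambda>p. return (act K) (response (snd p))) \<in> act K \<Otimes>\<^sub>M act K \<rightarrow>\<^sub>M prob_algebra (act K)" .
qed

context
  fixes sY :: "nat \<Rightarrow> (nat \<Rightarrow> real \<times> real) \<Rightarrow> real measure"
  assumes behavioral_Y: "behavioral_strategy K sY"
begin

interpretation profile: strategy_profile K enforcing_strategy sY
  using behavioral_enforcing_strategy behavioral_Y by unfold_locales

lemma expected_psi_0:
  "(\<integral>a. psi (fst a) \<partial>action_law K enforcing_strategy sY 0) = psi x0"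
proof -
  have "(\<integral>a. psi (fst a) \<partial>action_law K enforcing_strategy sY 0)
      = (\<integral>h. psi x0 \<partial>hist_law K enforcing_strategy sY 0)"
  proof (rule profile.integral_fst_action_law_deterministic[where r = "\<lambda>_. x0"])
    show "enforcing_strategy 0 h = return (act K) x0" for h
      by (simp add: enforcing_strategy_def memory_one_def)
  qed (use x0 abs_psi_le borel_measurable_psi in auto)
  also have "\<dots> = psi x0"
    by (simp add: prob_space.prob_space[OF profile.prob_space_hist_law])
  finally show ?thesis .
qed

lemma integrable_phi_snd: "integrable (action_law K enforcing_strategy sY t) (\<lambda>a. phi (snd a))"
proof (rule prob_space.integrable_bounded[OF profile.prob_space_action_law])
  show "(\<lambda>a. phi (snd a)) \<in> borel_measurable (action_law K enforcing_strategy sY t)"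
    by (rule profile.borel_measurable_action_law[OF borel_measurable_phi_snd])
  show "\<bar>phi (snd a)\<bar> \<le> phi K" if "a \<in> space (action_law K enforcing_strategy sY t)" for a
    using that phi_bounds by (auto simp: profile.space_action_law space_pair_measure space_act)
qed

lemma expected_psi_Suc:
  "lam * (\<integral>a. psi (fst a) \<partial>action_law K enforcing_strategy sY (Suc t))
     = - (\<integral>a. phi (snd a) \<partial>action_law K enforcing_strategy sY t) - offset"
proof -
  let ?\<nu> = "action_law K enforcing_strategy sY t"
  let ?hist = "hist_law K enforcing_strategy sY (Suc t)"
  have last: "snd (h t) \<in> {0..K}" if "h \<in> space (histM K (Suc t))" for h
    using measurable_space[OF measurable_history_entry[OF lessI] that] by (auto simp: space_pair_measure space_act)
  have "(\<integral>a. psi (fst a) \<partial>action_law K enforcing_strategy sY (Suc t))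
      = (\<integral>h. psi (response (snd (h t))) \<partial>?hist)"
  proof (rule profile.integral_fst_action_law_deterministic[where r = "\<lambda>h. response (snd (h t))"])
    show "enforcing_strategy (Suc t) h = return (act K) (response (snd (h t)))" for h
      by (simp add: enforcing_strategy_def memory_one_def)
  qed (use last response_in abs_psi_le borel_measurable_psi in auto)
  also have "\<dots> = (\<integral>h. target (snd (h t)) \<partial>?hist)"
  proof (rule Bochner_Integration.integral_cong[OF refl])
    show "psi (response (snd (h t))) = target (snd (h t))" if "h \<in> space ?hist" for h
      using that last psi_response by (simp add: profile.space_hist_law)
  qed
  also have "\<dots> = (\<integral>a. target (snd a) \<partial>?\<nu>)"
    unfolding action_law_def
    by (rule integral_distr[symmetric, OF profile.measurable_last_action
          measurable_compose[OF measurable_snd borel_measurable_act[OF continuous_on_target]]])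
  also have "\<dots> = (\<integral>a. - phi (snd a) - offset \<partial>?\<nu>) / lam"
    by (simp add: target_eq)
  also have "(\<integral>a. - phi (snd a) - offset \<partial>?\<nu>) = (\<integral>a. - phi (snd a) \<partial>?\<nu>) - (\<integral>a. offset \<partial>?\<nu>)"
    using integrable_minus[OF integrable_phi_snd]
      finite_measure.integrable_const[OF prob_space.finite_measure[OF profile.prob_space_action_law]]
    by (rule Bochner_Integration.integral_diff)
  also have "\<dots> = - (\<integral>a. phi (snd a) \<partial>?\<nu>) - offset"
    by (simp add: prob_space.prob_space[OF profile.prob_space_action_law])
  finally show ?thesis
    using lam by (simp add: field_simps)
qed

lemma payoff_psi_phi:
  "payoff K lam (\<lambda>a. psi (fst a) + phi (snd a)) enforcing_strategy sY = - (chi - 1) * kappa"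
proof -
  let ?payoff = "\<lambda>u. payoff K lam u enforcing_strategy sY"
  let ?\<nu> = "action_law K enforcing_strategy sY"
  define P where "P t = (\<integral>a. psi (fst a) \<partial>?\<nu> t)" for t
  define F where "F t = (\<integral>a. phi (snd a) \<partial>?\<nu> t)" for t
  have psi_fst_bound: "\<bar>psi (fst a)\<bar> \<le> chi * b K + c K"
    and phi_snd_bound: "\<bar>phi (snd a)\<bar> \<le> phi K" if "a \<in> space (act K \<Otimes>\<^sub>M act K)" for a
    using that abs_psi_le phi_bounds by (auto simp: space_pair_measure space_act mem_Times_iff)
  have P_bound: "\<bar>P t\<bar> \<le> chi * b K + c K" for t
    unfolding P_def
  proof (rule prob_space.abs_integral_le_bound[OF profile.prob_space_action_law])
    show "(\<lambda>a. psi (fst a)) \<in> borel_measurable (?\<nu> t)"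
      by (rule profile.borel_measurable_action_law[OF borel_measurable_psi_fst])
  qed (use psi_fst_bound in \<open>simp add: profile.space_action_law\<close>)
  have F_rec: "F t = - lam * P (Suc t) - offset" for t
    using expected_psi_Suc[of t] unfolding P_def F_def by simp
  have "?payoff (\<lambda>a. psi (fst a) + phi (snd a))
      = ?payoff (\<lambda>a. psi (fst a)) + ?payoff (\<lambda>a. phi (snd a))"
    using profile.payoff_add_mult[OF abs_lam_less_1 borel_measurable_psi_fst psi_fst_bound
        borel_measurable_phi_snd phi_snd_bound, of 1]
    by simp
  also have "\<dots> = (1 - lam) * (\<Sum>t. lam ^ t * P t) + (1 - lam) * (\<Sum>t. lam ^ t * F t)"
    by (simp add: payoff_def P_def F_def)
  also have "\<dots> = (1 - lam) * psi x0 - offset"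
    using discounted_sum_of_recursion[where P = P and F = F, OF abs_lam_less_1 P_bound F_rec] expected_psi_0
    by (simp add: P_def)
  finally show ?thesis
    by (simp add: offset_def algebra_simps)
qed

theorem enforces_linear_payoff_relation:
  "payoff K lam (\<lambda>(x, y). b y - c x) enforcing_strategy sY - kappa
     = chi * (payoff K lam (\<lambda>(x, y). b x - c y) enforcing_strategy sY - kappa)"
proof -
  have bounds: "\<bar>psi (fst a) + phi (snd a)\<bar> \<le> chi * b K + c K + phi K"
    "\<bar>(\<lambda>(x, y). b x - c y) a\<bar> \<le> b K + c K" if "a \<in> space (act K \<Otimes>\<^sub>M act K)" for a
  proof -
    from that have x: "fst a \<in> {0..K}" and y: "snd a \<in> {0..K}"
      by (auto simp: space_pair_measure space_act mem_Times_iff)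
    show "\<bar>psi (fst a) + phi (snd a)\<bar> \<le> chi * b K + c K + phi K"
      using abs_psi_le[OF x] phi_bounds[OF y] by (auto simp: abs_le_iff)
    show "\<bar>(\<lambda>(x, y). b x - c y) a\<bar> \<le> b K + c K"
      using abs_payoff_le[OF x y] by (simp add: case_prod_beta)
  qed
  have "payoff K lam (\<lambda>(x, y). b y - c x) enforcing_strategy sY
      = payoff K lam (\<lambda>a. (psi (fst a) + phi (snd a)) + chi * (\<lambda>(x, y). b x - c y) a) enforcing_strategy sY"
    by (simp only: payoff_X_decomposition)
  also have "\<dots> = - (chi - 1) * kappa + chi * payoff K lam (\<lambda>(x, y). b x - c y) enforcing_strategy sY"
    using profile.payoff_add_mult[OF abs_lam_less_1 _ bounds(1) borel_measurable_payoff_Y bounds(2)]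
      payoff_psi_phi by simp
  finally show ?thesis
    by (simp add: algebra_simps)
qed

end

end

theorem mainTheorem11:
  fixes K lam chi kappa x0 :: real and b c :: "real \<Rightarrow> real"
  assumes K: "K > 0"
    and b0: "b 0 = 0" and c0: "c 0 = 0"
    and bc: "\<And>s. s \<in> {0<..K} \<Longrightarrow> b s > c s"
    and bmono: "mono_on {0..K} b" and cmono: "mono_on {0..K} c"
    and bcont: "continuous_on {0..K} b" and ccont: "continuous_on {0..K} c"
    and lam: "0 < lam" "lam < 1"
    and chi: "chi \<ge> 1"
    and smono: "strict_mono_on {0..K} (\<lambda>s. chi * b s + c s)"
    and kappa: "0 \<le> kappa" "kappa \<le> b K - c K"
    and lamge: "lam \<ge> (b K + chi * c K) / (chi * b K + c K)"
    and x0: "x0 \<in> {0..K}"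
    and x0lo: "((chi - 1) * kappa - lam * (chi * b K + c K) + b K + chi * c K) / (1 - lam)
                 \<le> chi * b x0 + c x0"
    and x0hi: "chi * b x0 + c x0 \<le> (chi - 1) * kappa / (1 - lam)"
  shows "let psi = (\<lambda>s. - chi * b s - c s);
             arg = (\<lambda>(x::real) y. (- b y - chi * c y - (chi - 1) * kappa - (1 - lam) * psi x0) / lam);
             rX = (\<lambda>(x, y). the_inv_into {0..K} psi (arg x y));
             sX = memory_one (return (act K) x0) (\<lambda>p. return (act K) (rX p))
         in (\<forall>x\<in>{0..K}. \<forall>y\<in>{0..K}. arg x y \<in> psi ` {0..K}) \<and>
            (\<forall>sY. behavioral_strategy K sY \<longrightarrow>
               payoff K lam (\<lambda>(x, y). b y - c x) sX sY - kappa
                 = chi * (payoff K lam (\<lambda>(x, y). b x - c y) sX sY - kappa))"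
proof -
  interpret linear_enforcement K chi b c lam kappa x0
    using b0 c0 bmono cmono bcont ccont chi smono lam x0 x0lo x0hi by unfold_locales
  have psi: "(\<lambda>s. - chi * b s - c s) = psi"
    by (simp add: fun_eq_iff psi_def)
  have strategy: "memory_one (return (act K) x0)
      (\<lambda>p. return (act K) (case p of (x, y) \<Rightarrow> the_inv_into {0..K} psi (target y)))
      = enforcing_strategy"
    by (simp add: enforcing_strategy_def response_def case_prod_beta)
  show ?thesis
    unfolding Let_def psi target_def[symmetric] strategy
    using target_in_image enforces_linear_payoff_relation by blast
qed

end
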